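(* There is a constant $C$ such that for every $n\ge1$ there is a distribution $D$ on $\mathbb{R}_{\ge0}$ such that, when $v_1,\dots,v_n$ are i.i.d. with distribution $D$ (arriving in any order, in particular uniformly random order), every fixed-threshold algorithm (any threshold $\tau$ and any tie probability $\theta\in[0,1]$) has expected value at most $(1-1/e+C/n)\,\mathbb{E}[\max_iv_i]$. One such $D$ takes value $n/(e-1)$ with probability $1/n^2$ and value $(e-2)/(e-1)$ otherwise.
   Context: A fixed-threshold algorithm with threshold $\tau$ and tie probability $\theta$ observes the values in arrival order and gives the (single) item to the first buyer whose value exceeds $\tau$, or equals $\tau$ and wins an independent coin of bias $\theta$; its value is that buyer's value ($0$ if none). *)

theory Defs
  imports "HOL-Probability.Probability"
begin

text \<open>i.i.d. list of length n drawn from p (entry i = i-th arrival).\<close>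
fun iid_list_pmf :: "nat \<Rightarrow> 'a pmf \<Rightarrow> 'a list pmf" where
  "iid_list_pmf 0 p = return_pmf []"
| "iid_list_pmf (Suc n) p = bind_pmf p (\<lambda>x. map_pmf (\<lambda>xs. x # xs) (iid_list_pmf n p))"

fun fta :: "real \<Rightarrow> (real \<times> bool) list \<Rightarrow> real" where
  "fta \<tau> [] = 0"
| "fta \<tau> ((v, c) # rest) = (if \<tau> < v \<or> (v = \<tau> \<and> c) then v else fta \<tau> rest)"

definition sample_pmf :: "nat \<Rightarrow> real pmf \<Rightarrow> real \<Rightarrow> (real \<times> bool) list pmf" where
  "sample_pmf n D \<theta> = iid_list_pmf n (pair_pmf D (bernoulli_pmf \<theta>))"

definition fta_value :: "nat \<Rightarrow> real pmf \<Rightarrow> real \<Rightarrow> real \<Rightarrow> real" where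
  "fta_value n D \<tau> \<theta> = measure_pmf.expectation (sample_pmf n D \<theta>) (fta \<tau>)"

definition exp_max :: "nat \<Rightarrow> real pmf \<Rightarrow> real" where
  "exp_max n D = measure_pmf.expectation (iid_list_pmf n D) (\<lambda>vs. Max (set vs))"

definition hard_dist :: "nat \<Rightarrow> real pmf" where
  "hard_dist n = map_pmf (\<lambda>b. if b then real n / (exp 1 - 1) else (exp 1 - 2) / (exp 1 - 1))
                   (bernoulli_pmf (1 / (real n)^2))"

end

theory Submission
  imports Defs "HOL-Analysis.Complex_Transcendental"
begin

text \<open>
  Write a = n/(e-1) for the rare value (probability p = 1/n^2), b = (e-2)/(e-1) for the common
  one and c = 1/(e-1), so that b + c = 1. The maximum of the n draws is a if a appears and b
  otherwise, hence E[max] = a - (a-b)(1-p)^n >= n/(n+1). A fixed threshold accepts each arrival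
  independently with one probability s, so it earns A (1 + (1-s) + ... + (1-s)^(n-1)) where
  A = E[v; v accepted] <= b s + (a-b) p. With y = n s this is at most
  (b + c/y)(1 - exp(-y)) + O(1/n), and (b + c/y)(1 - exp(-y)) <= 1 - 1/e for every y > 0 is the
  one-variable inequality (1 + (e-2) y)(1 - exp(-y)) <= (e - 2 + 1/e) y, tight at y = 1.
\<close>

lemma exp1_bounds: "2.718 < exp (1::real)" "exp (1::real) < 2.7183"
  using e_approx_32 by (auto simp: abs_if split: if_split_asm)

definition hard_gap :: "real \<Rightarrow> real" where
  "hard_gap y = (exp 1 - 2 + 1 / exp 1) * y - (1 + (exp 1 - 2) * y) * (1 - exp (- y))"

definition hard_gap' :: "real \<Rightarrow> real" where
  "hard_gap' y = 1 / exp 1 - exp (- y) * (3 - exp 1 + (exp 1 - 2) * y)"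

lemma hard_gap_has_derivative: "DERIV hard_gap y :> hard_gap' y"
  unfolding hard_gap_def hard_gap'_def
  by (auto intro!: derivative_eq_intros simp: algebra_simps)

lemma hard_gap'_has_derivative:
  "DERIV hard_gap' y :> exp (- y) * ((exp 1 - 2) * y - (2 * exp 1 - 5))"
  unfolding hard_gap'_def
  by (auto intro!: derivative_eq_intros simp: algebra_simps)

text \<open>The inflection point of \<^const>\<open>hard_gap\<close>.\<close>
definition hard_gap_infl :: real where
  "hard_gap_infl = (2 * exp 1 - 5) / (exp 1 - 2)"

lemma hard_gap_infl_bounds: "0 < hard_gap_infl" "hard_gap_infl < 1"
  unfolding hard_gap_infl_def using exp1_bounds by (auto simp: field_simps)

lemma hard_gap'_mono:
  assumes "hard_gap_infl \<le> x" "x \<le> y"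
  shows "hard_gap' x \<le> hard_gap' y"
proof (rule DERIV_nonneg_imp_nondecreasing[OF assms(2)], intro allI impI exI conjI)
  fix z assume "x \<le> z" "z \<le> y"
  then have "hard_gap_infl \<le> z" using assms by simp
  then have "2 * exp 1 - 5 \<le> (exp 1 - 2) * z"
    using exp1_bounds unfolding hard_gap_infl_def by (simp add: divide_le_eq mult.commute)
  then show "0 \<le> exp (- z) * ((exp 1 - 2) * z - (2 * exp 1 - 5))" by simp
qed (rule hard_gap'_has_derivative)

lemma hard_gap'_antimono:
  assumes "x \<le> y" "y \<le> hard_gap_infl"
  shows "hard_gap' y \<le> hard_gap' x"
proof (rule DERIV_nonpos_imp_nonincreasing[OF assms(1)], intro allI impI exI conjI)
  fix z assume "x \<le> z" "z \<le> y"
  then have "z \<le> hard_gap_infl" using assms by simp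
  then have "(exp 1 - 2) * z \<le> 2 * exp 1 - 5"
    using exp1_bounds unfolding hard_gap_infl_def by (simp add: le_divide_eq mult.commute)
  then show "exp (- z) * ((exp 1 - 2) * z - (2 * exp 1 - 5)) \<le> 0" by (simp add: mult_nonneg_nonpos)
qed (rule hard_gap'_has_derivative)

lemma hard_gap_0: "hard_gap 0 = 0"
  by (simp add: hard_gap_def)

lemma hard_gap_1: "hard_gap 1 = 0"
  by (simp add: hard_gap_def exp_minus field_simps)

lemma hard_gap'_1: "hard_gap' 1 = 0"
  by (simp add: hard_gap'_def exp_minus field_simps)

text \<open>Beyond the inflection point \<^const>\<open>hard_gap\<close> is convex with a double zero at \<open>1\<close>.\<close>
lemma hard_gap_nonneg_right:
  assumes "hard_gap_infl \<le> y"
  shows "0 \<le> hard_gap y"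
proof (cases "y \<le> 1")
  case True
  have "hard_gap 1 \<le> hard_gap y"
    by (rule DERIV_nonpos_imp_nonincreasing[of y 1])
      (use True assms hard_gap'_mono[of _ 1] hard_gap'_1 in \<open>auto intro!: hard_gap_has_derivative\<close>)
  then show ?thesis by (simp add: hard_gap_1)
next
  case False
  have "hard_gap 1 \<le> hard_gap y"
    by (rule DERIV_nonneg_imp_nondecreasing[of 1 y])
      (use False hard_gap_infl_bounds hard_gap'_mono[of 1] hard_gap'_1
        in \<open>auto intro!: hard_gap_has_derivative\<close>)
  then show ?thesis by (simp add: hard_gap_1)
qed

text \<open>Before the inflection point \<^const>\<open>hard_gap'\<close> decreases, so \<^const>\<open>hard_gap\<close> is
  first increasing from \<open>hard_gap 0 = 0\<close> and then decreasing to \<open>hard_gap hard_gap_infl \<ge> 0\<close>.\<close>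
lemma hard_gap_nonneg:
  assumes "0 \<le> y"
  shows "0 \<le> hard_gap y"
proof (cases "hard_gap_infl \<le> y")
  case True
  then show ?thesis by (rule hard_gap_nonneg_right)
next
  case False
  show ?thesis
  proof (cases "0 \<le> hard_gap' y")
    case True
    have "hard_gap 0 \<le> hard_gap y"
    proof (rule DERIV_nonneg_imp_nondecreasing[OF assms], intro allI impI exI conjI)
      fix x assume "0 \<le> x" "x \<le> y"
      then show "0 \<le> hard_gap' x" using hard_gap'_antimono[of x y] False True by simp
    qed (rule hard_gap_has_derivative)
    then show ?thesis by (simp add: hard_gap_0)
  next
    case neg: False
    have "hard_gap hard_gap_infl \<le> hard_gap y"
    proof (rule DERIV_nonpos_imp_nonincreasing, use False in simp, intro allI impI exI conjI)
      fix x assume "y \<le> x" "x \<le> hard_gap_infl"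
      then show "hard_gap' x \<le> 0" using hard_gap'_antimono[of y x] neg by simp
    qed (rule hard_gap_has_derivative)
    then show ?thesis using hard_gap_nonneg_right[of hard_gap_infl] by simp
  qed
qed

lemma threshold_main_term_le:
  fixes y :: real
  assumes "0 < y"
  shows "((exp 1 - 2) / (exp 1 - 1) + 1 / ((exp 1 - 1) * y)) * (1 - exp (- y)) \<le> 1 - 1 / exp 1"
proof -
  have e1: "0 < exp 1 - (1::real)" using exp1_bounds by simp
  have "((exp 1 - 2) / (exp 1 - 1) + 1 / ((exp 1 - 1) * y)) * (1 - exp (- y))
      = (1 + (exp 1 - 2) * y) * (1 - exp (- y)) / ((exp 1 - 1) * y)"
    using assms e1 by (simp add: divide_simps)
  also have "\<dots> \<le> (exp 1 - 2 + 1 / exp 1) * y / ((exp 1 - 1) * y)"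
    using hard_gap_nonneg[of y] assms e1 by (intro divide_right_mono) (auto simp: hard_gap_def)
  also have "\<dots> = 1 - 1 / exp 1"
    using assms e1 by (simp add: field_simps)
  finally show ?thesis .
qed

lemma inverse_exp1_minus_one_le: "1 / (exp 1 - 1) \<le> 1 - 1 / exp (1::real)"
proof -
  have "1.718 * 1.718 \<le> (exp 1 - 1) * (exp 1 - (1::real))"
    using exp1_bounds by (intro mult_mono) auto
  then have "exp 1 \<le> (exp 1 - 1) * (exp 1 - (1::real))"
    using exp1_bounds by simp
  then show ?thesis using exp1_bounds by (simp add: field_simps)
qed

lemma one_minus_power_ge:
  assumes "0 \<le> s" "s \<le> 1"
  shows "exp (- (real n * s)) * (1 - real n * s\<^sup>2) \<le> (1 - s) ^ n"
proof -
  have "1 - s\<^sup>2 \<le> (1 - s) * exp s"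
    using mult_left_mono[OF exp_ge_add_one_self[of s], of "1 - s"] assms
    by (simp add: power2_eq_square algebra_simps)
  then have step: "exp (- s) * (1 - s\<^sup>2) \<le> 1 - s"
    by (simp add: exp_minus field_simps)
  have "1 - real n * s\<^sup>2 \<le> (1 - s\<^sup>2) ^ n"
    using Bernoulli_inequality[of "- (s\<^sup>2)" n] assms by (simp add: power_le_one)
  then have "exp (- (real n * s)) * (1 - real n * s\<^sup>2) \<le> exp (- s) ^ n * (1 - s\<^sup>2) ^ n"
    by (simp add: mult_left_mono flip: exp_of_nat_mult)
  also have "\<dots> = (exp (- s) * (1 - s\<^sup>2)) ^ n"
    by (simp add: power_mult_distrib)
  also have "\<dots> \<le> (1 - s) ^ n"
    using assms by (intro power_mono[OF step]) (auto simp: power_le_one)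
  finally show ?thesis .
qed

lemma mult_exp_minus_le:
  fixes y :: real
  assumes "0 \<le> y"
  shows "y * exp (- y) \<le> 1" "y\<^sup>2 * exp (- y) \<le> 2"
proof -
  have "y \<le> exp y"
    using exp_ge_add_one_self[of y] by linarith
  then show "y * exp (- y) \<le> 1"
    by (simp add: exp_minus field_simps)
  show "y\<^sup>2 * exp (- y) \<le> 2"
    using exp_lower_Taylor_quadratic[OF assms] assms by (simp add: exp_minus field_simps)
qed

lemma threshold_sum_le:
  fixes n :: nat and s P :: real
  assumes n: "n \<ge> 1" and s: "0 \<le> s" "s \<le> 1" and P: "P * real n \<le> 1 / (exp 1 - 1)"
  shows "((exp 1 - 2) / (exp 1 - 1) * s + P) * (\<Sum>i<n. (1 - s) ^ i) \<le> 1 - 1 / exp 1 + 2 / real n"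
proof -
  define b c :: real where "b = (exp 1 - 2) / (exp 1 - 1)" and "c = 1 / (exp 1 - 1)"
  define S where "S = (\<Sum>i<n. (1 - s) ^ i)"
  have bc: "0 < b" "0 < c" "b + c = 1"
    using exp1_bounds by (auto simp: b_def c_def divide_simps)
  have nn: "1 \<le> real n" using n by simp
  have "(b * s + P) * S \<le> 1 - 1 / exp 1 + 2 / real n"
  proof (cases "s = 0")
    case True
    then have "(b * s + P) * S = P * real n" by (simp add: S_def)
    also have "\<dots> \<le> 1 - 1 / exp 1" using P inverse_exp1_minus_one_le by linarith
    also have "\<dots> \<le> 1 - 1 / exp 1 + 2 / real n" by simp
    finally show ?thesis .
  next
    case False
    define y where "y = real n * s"
    have y: "0 < y" using False s nn by (simp add: y_def)
    have sS: "s * S = 1 - (1 - s) ^ n"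
      using one_diff_power_eq[of "1 - s" n] by (simp add: S_def)
    have sS_nonneg: "0 \<le> s * S"
      using s by (simp add: S_def sum_nonneg)
    have "y\<^sup>2 / real n = real n * s\<^sup>2"
      using nn by (simp add: y_def power2_eq_square)
    then have "exp (- y) * (1 - y\<^sup>2 / real n) \<le> (1 - s) ^ n"
      using one_minus_power_ge[OF s, of n] by (simp add: y_def)
    then have sS_le: "s * S \<le> (1 - exp (- y)) + y\<^sup>2 * exp (- y) / real n"
      unfolding sS by (simp add: algebra_simps)
    have "(b * s + P) * S = b * (s * S) + (P * real n) * (s * S) / y"
      using False nn by (simp add: y_def field_simps)
    also have "\<dots> \<le> b * (s * S) + c * (s * S) / y"
      using P sS_nonneg y by (intro add_left_mono divide_right_mono mult_right_mono) (auto simp: c_def)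
    also have "\<dots> = (b + c / y) * (s * S)"
      by (simp add: distrib_right)
    also have "\<dots> \<le> (b + c / y) * ((1 - exp (- y)) + y\<^sup>2 * exp (- y) / real n)"
      using bc y by (intro mult_left_mono[OF sS_le]) auto
    also have "\<dots> = (b + c / y) * (1 - exp (- y))
        + (b * (y\<^sup>2 * exp (- y)) + c * (y * exp (- y))) / real n"
      using y by (simp add: field_simps power2_eq_square)
    also have "\<dots> \<le> 1 - 1 / exp 1 + (b * 2 + c * 1) / real n"
      using threshold_main_term_le[OF y] mult_exp_minus_le[of y] y bc nn
      unfolding b_def c_def
      by (intro add_mono divide_right_mono mult_left_mono) (auto simp: divide_simps)
    also have "\<dots> \<le> 1 - 1 / exp 1 + 2 / real n"
      using bc nn by (intro add_left_mono divide_right_mono) auto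
    finally show ?thesis .
  qed
  then show ?thesis by (simp add: b_def S_def)
qed

lemma set_pmf_iid_list_pmf:
  "set_pmf (iid_list_pmf n p) \<subseteq> {xs. set xs \<subseteq> set_pmf p \<and> length xs = n}"
  by (induction n) fastforce+

lemma finite_set_pmf_iid_list_pmf:
  "finite (set_pmf p) \<Longrightarrow> finite (set_pmf (iid_list_pmf n p))"
  by (rule finite_subset[OF set_pmf_iid_list_pmf finite_lists_length_eq])

lemma expectation_bind_pmf_finite:
  fixes f :: "'b \<Rightarrow> real"
  assumes "finite (set_pmf p)" "\<And>x. x \<in> set_pmf p \<Longrightarrow> finite (set_pmf (N x))"
  shows "measure_pmf.expectation (bind_pmf p N) f
    = measure_pmf.expectation p (\<lambda>x. measure_pmf.expectation (N x) f)"
  using pmf_expectation_bind[OF assms order_refl, where h = f]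
    integral_measure_pmf_real[OF assms(1), of p "\<lambda>x. measure_pmf.expectation (N x) f"]
  by (simp add: mult.commute)

lemma expectation_iid_list_pmf_Suc:
  fixes f :: "'a list \<Rightarrow> real"
  assumes "finite (set_pmf p)"
  shows "measure_pmf.expectation (iid_list_pmf (Suc n) p) f =
    measure_pmf.expectation p (\<lambda>x. measure_pmf.expectation (iid_list_pmf n p) (\<lambda>xs. f (x # xs)))"
  using assms by (simp add: expectation_bind_pmf_finite finite_set_pmf_iid_list_pmf)

lemma expectation_pair_pmf_bernoulli:
  fixes g :: "'a \<times> bool \<Rightarrow> real"
  assumes "finite (set_pmf D)" "0 \<le> \<theta>" "\<theta> \<le> 1"
  shows "measure_pmf.expectation (pair_pmf D (bernoulli_pmf \<theta>)) g =
     measure_pmf.expectation D (\<lambda>v. g (v, True) * \<theta> + g (v, False) * (1 - \<theta>))"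
  unfolding pair_pmf_def using assms by (simp add: expectation_bind_pmf_finite)

definition accepts :: "real \<Rightarrow> real \<times> bool \<Rightarrow> bool" where
  "accepts \<tau> x \<longleftrightarrow> \<tau> < fst x \<or> (fst x = \<tau> \<and> snd x)"

lemma fta_Cons: "fta \<tau> (x # xs) = (if accepts \<tau> x then fst x else fta \<tau> xs)"
  by (cases x) (simp add: accepts_def)

lemma expectation_fta_iid:
  fixes \<tau> :: real and q :: "(real \<times> bool) pmf"
  assumes fin: "finite (set_pmf q)"
  defines "s \<equiv> measure_pmf.prob q {x. accepts \<tau> x}"
  shows "measure_pmf.expectation (iid_list_pmf n q) (fta \<tau>) =
     measure_pmf.expectation q (\<lambda>x. if accepts \<tau> x then fst x else 0) * (\<Sum>i<n. (1 - s) ^ i)"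
proof (induction n)
  case 0
  then show ?case by simp
next
  case (Suc n)
  define A where "A = measure_pmf.expectation q (\<lambda>x. if accepts \<tau> x then fst x else 0)"
  define K where "K = measure_pmf.expectation (iid_list_pmf n q) (fta \<tau>)"
  have int: "integrable (measure_pmf q) g" for g :: "real \<times> bool \<Rightarrow> real"
    using fin by (rule integrable_measure_pmf_finite)
  have "measure_pmf.expectation (iid_list_pmf (Suc n) q) (fta \<tau>)
      = measure_pmf.expectation q (\<lambda>x. if accepts \<tau> x then fst x else K)"
    unfolding expectation_iid_list_pmf_Suc[OF fin] fta_Cons K_def
    by (intro Bochner_Integration.integral_cong) auto
  also have "\<dots> = measure_pmf.expectation q
      (\<lambda>x. (if accepts \<tau> x then fst x else 0) + K * (1 - indicator {x. accepts \<tau> x} x))"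
    by (intro Bochner_Integration.integral_cong) auto
  also have "\<dots> = A + K * (1 - s)"
    by (simp add: A_def s_def int)
  also have "\<dots> = A * (1 + (1 - s) * (\<Sum>i<n. (1 - s) ^ i))"
    using Suc.IH by (simp add: A_def K_def algebra_simps)
  also have "\<dots> = A * (\<Sum>i<Suc n. (1 - s) ^ i)"
    by (simp add: sum.lessThan_Suc_shift sum_distrib_left del: sum.lessThan_Suc)
  finally show ?case by (simp add: A_def)
qed

lemma power_one_minus_mult_le:
  fixes p :: real
  assumes "0 \<le> p" "p \<le> 1"
  shows "(1 - p) ^ n * (1 + real n * p) \<le> 1"
proof -
  have "(1 - p) ^ n * (1 + real n * p) \<le> (1 - p) ^ n * (1 + p) ^ n"
    using Bernoulli_inequality[of p n] assms by (intro mult_left_mono) auto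
  also have "\<dots> = (1 - p\<^sup>2) ^ n"
    by (simp add: power2_eq_square algebra_simps flip: power_mult_distrib)
  also have "\<dots> \<le> 1"
    using assms by (intro power_le_one) (auto simp: power_le_one)
  finally show ?thesis .
qed

lemma finite_set_pmf_hard_dist: "finite (set_pmf (hard_dist n))"
  by (simp add: hard_dist_def)

lemma set_pmf_hard_dist:
  "set_pmf (hard_dist n) \<subseteq> {real n / (exp 1 - 1), (exp 1 - 2) / (exp 1 - 1)}"
  by (auto simp: hard_dist_def)

lemma set_pmf_hard_dist_nonneg: "set_pmf (hard_dist n) \<subseteq> {0..}"
  using set_pmf_hard_dist[of n] exp1_bounds by auto

lemma expectation_hard_dist:
  assumes "n \<ge> 1"
  shows "measure_pmf.expectation (hard_dist n) f =
    f (real n / (exp 1 - 1)) * (1 / real n ^ 2) + f ((exp 1 - 2) / (exp 1 - 1)) * (1 - 1 / real n ^ 2)"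
proof -
  have "0 \<le> 1 / real n ^ 2" "1 / real n ^ 2 \<le> 1" using assms by (auto simp: field_simps)
  then show ?thesis by (simp add: hard_dist_def)
qed

lemma hard_dist_values_less:
  assumes "n \<ge> 1"
  shows "(exp 1 - 2) / (exp 1 - 1) < real n / (exp 1 - 1)"
  using assms exp1_bounds by (intro divide_strict_right_mono) auto

lemma fta_value_hard_dist_le:
  assumes n: "n \<ge> 1" and \<theta>: "0 \<le> \<theta>" "\<theta> \<le> 1"
  shows "fta_value n (hard_dist n) \<tau> \<theta> \<le> 1 - 1 / exp 1 + 2 / real n"
proof -
  define a lo p :: real
    where "a = real n / (exp 1 - 1)" and "lo = (exp 1 - 2) / (exp 1 - 1)" and "p = 1 / real n ^ 2"
  define q where "q = pair_pmf (hard_dist n) (bernoulli_pmf \<theta>)"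
  define s where "s = measure_pmf.prob q {x. accepts \<tau> x}"
  define A where "A = measure_pmf.expectation q (\<lambda>x. if accepts \<tau> x then fst x else 0)"
  have fin: "finite (set_pmf q)"
    by (simp add: q_def finite_set_pmf_hard_dist)
  have lo_a: "0 \<le> lo" "lo < a"
    using hard_dist_values_less[OF n] exp1_bounds by (simp_all add: a_def lo_def)
  have "A \<le> measure_pmf.expectation q
      (\<lambda>x. lo * indicator {x. accepts \<tau> x} x + (a - lo) * (if fst x = a then 1 else 0))"
    unfolding A_def
  proof (rule integral_mono_AE[OF integrable_measure_pmf_finite[OF fin]
        integrable_measure_pmf_finite[OF fin] AE_pmfI])
    fix x assume "x \<in> set_pmf q"
    then have "fst x \<in> {a, lo}"
      using set_pmf_hard_dist[of n] by (auto simp: q_def a_def lo_def)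
    then show "(if accepts \<tau> x then fst x else 0)
        \<le> lo * indicator {x. accepts \<tau> x} x + (a - lo) * (if fst x = a then 1 else 0)"
      using lo_a by auto
  qed
  also have "\<dots> = lo * measure_pmf.expectation q (indicator {x. accepts \<tau> x})
      + (a - lo) * measure_pmf.expectation q (\<lambda>x. if fst x = a then 1 else 0)"
    by (simp add: integrable_measure_pmf_finite[OF fin])
  also have "\<dots> = lo * s + (a - lo) * p"
    using \<theta> lo_a
    by (simp add: s_def q_def expectation_pair_pmf_bernoulli finite_set_pmf_hard_dist
        expectation_hard_dist[OF n, folded a_def lo_def p_def])
  finally have A: "A \<le> lo * s + (a - lo) * p" .
  have "(a - lo) * p * real n \<le> a / real n"
    using n lo_a by (simp add: p_def power2_eq_square field_simps)
  then have P: "(a - lo) * p * real n \<le> 1 / (exp 1 - 1)"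
    using n by (simp add: a_def)
  have "fta_value n (hard_dist n) \<tau> \<theta> = A * (\<Sum>i<n. (1 - s) ^ i)"
    unfolding fta_value_def sample_pmf_def A_def s_def q_def
    by (rule expectation_fta_iid) (simp add: finite_set_pmf_hard_dist)
  also have "\<dots> \<le> (lo * s + (a - lo) * p) * (\<Sum>i<n. (1 - s) ^ i)"
    by (intro mult_right_mono[OF A] sum_nonneg) (simp add: s_def)
  also have "\<dots> \<le> 1 - 1 / exp 1 + 2 / real n"
    by (rule threshold_sum_le[OF n _ _ P, folded lo_def]) (simp_all add: s_def)
  finally show ?thesis .
qed

lemma exp_max_hard_dist_ge:
  assumes n: "n \<ge> 1"
  shows "real n / (real n + 1) \<le> exp_max n (hard_dist n)"
proof -
  define a lo p :: real
    where "a = real n / (exp 1 - 1)" and "lo = (exp 1 - 2) / (exp 1 - 1)" and "p = 1 / real n ^ 2"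
  define L where "L vs = (if a \<in> set vs then a else lo)" for vs
  have nn: "1 \<le> real n" using n by simp
  have p: "0 \<le> p" "p \<le> 1" using nn by (auto simp: p_def field_simps)
  have lo_a: "lo < a"
    using hard_dist_values_less[OF n] by (simp add: a_def lo_def)
  have EL: "measure_pmf.expectation (iid_list_pmf m (hard_dist n)) L = a - (a - lo) * (1 - p) ^ m"
    for m
  proof (induction m)
    case 0
    then show ?case by (simp add: L_def)
  next
    case (Suc m)
    have "measure_pmf.expectation (iid_list_pmf (Suc m) (hard_dist n)) L
        = a * p + measure_pmf.expectation (iid_list_pmf m (hard_dist n)) L * (1 - p)"
      unfolding expectation_iid_list_pmf_Suc[OF finite_set_pmf_hard_dist]
        expectation_hard_dist[OF n, folded a_def lo_def p_def]
      using lo_a by (simp add: L_def[abs_def])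
    then show ?case
      by (simp add: Suc algebra_simps)
  qed
  have pow: "(1 - p) ^ n \<le> real n / (real n + 1)"
    using power_one_minus_mult_le[OF p, of n] nn by (simp add: p_def power2_eq_square field_simps)
  have "real n / (real n + 1) = a - (a - lo) * (real n / (real n + 1))"
    using nn exp1_bounds by (simp add: a_def lo_def divide_simps) (simp add: algebra_simps)
  also have "\<dots> \<le> a - (a - lo) * (1 - p) ^ n"
    using mult_left_mono[OF pow, of "a - lo"] lo_a by simp
  also have "\<dots> = measure_pmf.expectation (iid_list_pmf n (hard_dist n)) L"
    by (rule EL[symmetric])
  also have "\<dots> \<le> exp_max n (hard_dist n)"
    unfolding exp_max_def
  proof (rule integral_mono_AE[OF integrable_measure_pmf_finite integrable_measure_pmf_finite AE_pmfI])
    show "finite (set_pmf (iid_list_pmf n (hard_dist n)))"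
      by (rule finite_set_pmf_iid_list_pmf[OF finite_set_pmf_hard_dist])
    then show "finite (set_pmf (iid_list_pmf n (hard_dist n)))" .
    fix vs assume "vs \<in> set_pmf (iid_list_pmf n (hard_dist n))"
    then have "set vs \<subseteq> {a, lo}" "vs \<noteq> []"
      using set_pmf_iid_list_pmf set_pmf_hard_dist[of n] n by (fastforce simp: a_def lo_def)+
    then have "L vs \<in> set vs"
      by (cases vs) (auto simp: L_def)
    then show "L vs \<le> Max (set vs)"
      by simp
  qed
  finally show ?thesis .
qed

lemma add_divide_le_ratio_mult:
  fixes t x :: real
  assumes "t \<le> 1" "1 \<le> x"
  shows "t + 2 / x \<le> (t + 5 / x) * (x / (x + 1))"
proof -
  have "2 / x \<le> 2" using assms by (simp add: divide_le_eq)
  moreover have "(t + 2 / x) * (x + 1) = t * x + t + 2 + 2 / x"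
    using assms by (simp add: field_simps)
  moreover have "(t + 5 / x) * x = t * x + 5"
    using assms by (simp add: field_simps)
  ultimately have "(t + 2 / x) * (x + 1) \<le> (t + 5 / x) * x"
    using assms by linarith
  then show ?thesis
    using assms by (simp add: le_divide_eq mult.assoc)
qed

theorem theorem5:
  shows "\<exists>C::real. \<forall>n::nat. n \<ge> 1 \<longrightarrow>
    (set_pmf (hard_dist n) \<subseteq> {0..} \<and>
     (\<forall>\<tau> \<theta>::real. 0 \<le> \<theta> \<and> \<theta> \<le> 1 \<longrightarrow>
        fta_value n (hard_dist n) \<tau> \<theta>
          \<le> (1 - 1 / exp 1 + C / real n) * exp_max n (hard_dist n)))"
proof (intro exI[of _ 5] allI impI conjI)
  fix n :: nat
  assume n: "n \<ge> 1"
  show "set_pmf (hard_dist n) \<subseteq> {0..}"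
    by (rule set_pmf_hard_dist_nonneg)
  fix \<tau> \<theta> :: real
  assume \<theta>: "0 \<le> \<theta> \<and> \<theta> \<le> 1"
  have nn: "1 \<le> real n" using n by simp
  have e: "0 \<le> 1 - 1 / exp (1::real)" by simp
  have "fta_value n (hard_dist n) \<tau> \<theta> \<le> 1 - 1 / exp 1 + 2 / real n"
    using fta_value_hard_dist_le[OF n] \<theta> by simp
  also have "\<dots> \<le> (1 - 1 / exp 1 + 5 / real n) * (real n / (real n + 1))"
    using nn by (intro add_divide_le_ratio_mult) auto
  also have "\<dots> \<le> (1 - 1 / exp 1 + 5 / real n) * exp_max n (hard_dist n)"
    using e nn by (intro mult_left_mono exp_max_hard_dist_ge[OF n]) auto
  finally show "fta_value n (hard_dist n) \<tau> \<theta> \<le> (1 - 1 / exp 1 + 5 / real n) * exp_max n (hard_dist n)" .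
qed

end
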